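(* For every $n\ge0$, there is a bijection between the set of linked cycles on $[n+1]$ and the set $P_2(n)$ of all set partitions of $[k]$, for some $0\le k\le 2n$, into exactly $n$ blocks each having at most $2$ elements.
   Context: Two finite sets of integers $E,F$ are nearly disjoint if for every $i\in E\cap F$ either ($i=\min(E)$, $|E|>1$, $i\ne\min(F)$) or ($i=\min(F)$, $|F|>1$, $i\ne\min(E)$). A linked partition of $[m]$ is a set of nonempty subsets (blocks) of $[m]$ with union $[m]$, any two distinct blocks nearly disjoint. A linked cycle on $[m]$ is a linked partition of $[m]$ together with a cyclic arrangement of the elements of each block. *)

theory Defs
  imports Main "HOL-Library.Disjoint_Sets" "HOL-Combinatorics.Permutations"
begin

definition nearly_disjoint :: "nat set \<Rightarrow> nat set \<Rightarrow> bool" where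
  "nearly_disjoint E F \<longleftrightarrow>
     (\<forall>i \<in> E \<inter> F.
        (i = Min E \<and> card E > 1 \<and> i \<noteq> Min F) \<or>
        (i = Min F \<and> card F > 1 \<and> i \<noteq> Min E))"

definition linked_partition :: "nat \<Rightarrow> nat set set \<Rightarrow> bool" where
  "linked_partition m P \<longleftrightarrow>
     (\<forall>B \<in> P. B \<noteq> {} \<and> B \<subseteq> {1..m}) \<and> \<Union>P = {1..m} \<and>
     (\<forall>E \<in> P. \<forall>F \<in> P. E \<noteq> F \<longrightarrow> nearly_disjoint E F)"

text \<open>A cyclic arrangement of the elements of a finite set B, represented as a
  cyclic permutation of B: a permutation of B (fixing everything outside B)
  with a single orbit on B.\<close>
definition cyclic_arrangement :: "nat set \<Rightarrow> (nat \<Rightarrow> nat) \<Rightarrow> bool" where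
  "cyclic_arrangement B \<sigma> \<longleftrightarrow>
     \<sigma> permutes B \<and> (\<forall>x \<in> B. \<forall>y \<in> B. \<exists>k::nat. (\<sigma> ^^ k) x = y)"

text \<open>A linked cycle on [m]: a linked partition together with a cyclic arrangement
  of each block, represented as a set of pairs (block, arrangement), one per block.\<close>
definition linked_cycle :: "nat \<Rightarrow> (nat set \<times> (nat \<Rightarrow> nat)) set \<Rightarrow> bool" where
  "linked_cycle m L \<longleftrightarrow>
     linked_partition m (fst ` L) \<and> inj_on fst L \<and>
     (\<forall>(B, \<sigma>) \<in> L. cyclic_arrangement B \<sigma>)"

definition linked_cycles :: "nat \<Rightarrow> (nat set \<times> (nat \<Rightarrow> nat)) set set" where
  "linked_cycles m = {L. linked_cycle m L}"

definition P2 :: "nat \<Rightarrow> nat set set set" where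
  "P2 n = {P. \<exists>k \<le> 2 * n. partition_on {1..k} P \<and> card P = n \<and> (\<forall>B \<in> P. card B \<le> 2)}"

end

theory Submission
  imports Defs
begin

text \<open>Grade a linked cycle by the number \<open>j\<close> of its elements that are not the minimum of
  their block. A linked cycle on \<open>[m + 1]\<close> arises in exactly one way from one on \<open>[m]\<close>: by
  adding \<open>m + 1\<close> as a singleton block, as a block \<open>{i, m + 1}\<close> with \<open>i\<close> a non-minimal element
  that is no block's minimum, or into the cycle of a block right after one of its elements.
  The last two raise the grade by one and can be done in \<open>m + grade\<close> ways, so the number
  \<open>c(m + 1, j)\<close> of linked cycles on \<open>[m + 1]\<close> of grade \<open>j\<close> satisfies
  \<open>c(m + 2, j) = c(m + 1, j) + (m + j) c(m + 1, j - 1)\<close>. The number of partitions of \<open>[m + j]\<close>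
  into \<open>m\<close> blocks of size at most two obeys the same recursion (the largest element is a
  singleton or paired with one of the others), hence equals \<open>c(m + 1, j)\<close>. Summing over
  \<open>j \<le> n\<close>, both sides of the theorem have the size of the set of partitions of some \<open>[n + j]\<close>
  into \<open>n\<close> such blocks.\<close>

section \<open>Cyclic arrangements\<close>

lemma cyclic_arrangement_singleton_iff: "cyclic_arrangement {a} \<sigma> \<longleftrightarrow> \<sigma> = id"
  by (auto simp: cyclic_arrangement_def intro: exI[of _ 0])

lemma cyclic_arrangement_moves:
  assumes "cyclic_arrangement B \<sigma>" "x \<in> B" "y \<in> B" "y \<noteq> x"
  shows "\<sigma> x \<noteq> x"
proof
  assume "\<sigma> x = x"
  then have "(\<sigma> ^^ k) x = x" for k
    by (induction k) auto
  moreover obtain k where "(\<sigma> ^^ k) x = y"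
    using assms by (auto simp: cyclic_arrangement_def)
  ultimately show False
    using assms(4) by simp
qed

lemma cyclic_arrangement_doubleton_iff:
  assumes "i \<noteq> j"
  shows "cyclic_arrangement {i, j} \<sigma> \<longleftrightarrow> \<sigma> = transpose i j"
proof
  assume cyc: "cyclic_arrangement {i, j} \<sigma>"
  then have perm: "\<sigma> permutes {i, j}"
    by (simp add: cyclic_arrangement_def)
  have "\<sigma> i \<in> {i, j}" "\<sigma> j \<in> {i, j}"
    using permutes_in_image[OF perm] by auto
  moreover have "\<sigma> i \<noteq> i" "\<sigma> j \<noteq> j"
    using cyclic_arrangement_moves[OF cyc] assms by auto
  ultimately have "\<sigma> i = j" "\<sigma> j = i"
    by auto
  then show "\<sigma> = transpose i j"
    using permutes_not_in[OF perm] by (auto simp: fun_eq_iff transpose_def)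
next
  assume "\<sigma> = transpose i j"
  moreover have "transpose i j permutes {i, j}"
    by (rule permutes_swap_id) auto
  moreover have "\<exists>k. (transpose i j ^^ k) x = y" if "x \<in> {i, j}" "y \<in> {i, j}" for x y
    using that assms by (cases "x = y") (auto intro: exI[of _ 0] exI[of _ 1])
  ultimately show "cyclic_arrangement {i, j} \<sigma>"
    by (simp add: cyclic_arrangement_def)
qed

lemma funpow_simulation:
  assumes x: "x \<in> A" and closed: "\<And>z. z \<in> A \<Longrightarrow> f z \<in> A"
    and step: "\<And>z. z \<in> A \<Longrightarrow> \<exists>j. (s ^^ j) (g z) = g (f z)"
  shows "\<exists>j. (s ^^ j) (g x) = g ((f ^^ k) x)"
proof (induction k)
  case 0
  show ?case
    by (intro exI[of _ 0]) simp
next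
  case (Suc k)
  then obtain i where i: "(s ^^ i) (g x) = g ((f ^^ k) x)" ..
  have "(f ^^ k) x \<in> A"
    using x closed by (induction k) auto
  then obtain j where "(s ^^ j) (g ((f ^^ k) x)) = g (f ((f ^^ k) x))"
    using step by blast
  then have "(s ^^ (j + i)) (g x) = g ((f ^^ Suc k) x)"
    using i by (simp add: funpow_add)
  then show ?case ..
qed

lemma cyclic_arrangementI:
  assumes "s permutes A" "c \<in> A"
    and to_c: "\<And>x. x \<in> A \<Longrightarrow> \<exists>j. (s ^^ j) x = c" and from_c: "\<And>y. y \<in> A \<Longrightarrow> \<exists>j. (s ^^ j) c = y"
  shows "cyclic_arrangement A s"
proof -
  have "\<exists>k. (s ^^ k) x = y" if x: "x \<in> A" and y: "y \<in> A" for x y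
  proof -
    obtain i j where "(s ^^ i) x = c" "(s ^^ j) c = y"
      using to_c[OF x] from_c[OF y] by blast
    then have "(s ^^ (j + i)) x = y"
      by (simp add: funpow_add)
    then show ?thesis ..
  qed
  with assms(1) show ?thesis
    by (simp add: cyclic_arrangement_def)
qed

lemma cyclic_arrangement_predecessor:
  assumes cyc: "cyclic_arrangement B \<sigma>" and N: "N \<in> B" "B \<noteq> {N}"
  obtains a where "a \<in> B - {N}" "\<sigma> a = N"
proof -
  have perm: "\<sigma> permutes B"
    using cyc by (simp add: cyclic_arrangement_def)
  have a: "\<sigma> (inv \<sigma> N) = N"
    using permutes_inverses(1)[OF perm] by simp
  have "\<sigma> N \<noteq> N"
    using N cyclic_arrangement_moves[OF cyc N(1)] by blast
  then have "inv \<sigma> N \<in> B - {N}"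
    using a permutes_in_image[OF perm, of "inv \<sigma> N"] N by auto
  with a show thesis
    using that by blast
qed

text \<open>Composing with \<open>transpose a N\<close> inserts \<open>N\<close> into the cycle right after \<open>a\<close>, and
  removes it again when \<open>a\<close> is its predecessor.\<close>

lemma cyclic_arrangement_insert:
  assumes cyc: "cyclic_arrangement B \<tau>" and a: "a \<in> B" and N: "N \<notin> B"
  shows "cyclic_arrangement (insert N B) (\<tau> \<circ> transpose a N)"
proof -
  define s where "s = \<tau> \<circ> transpose a N"
  have perm: "\<tau> permutes B"
    using cyc by (simp add: cyclic_arrangement_def)
  have s_a: "s a = N" and s_N: "s N = \<tau> a"
    using permutes_not_in[OF perm N] by (simp_all add: s_def)
  have step: "\<exists>j. (s ^^ j) z = \<tau> z" if "z \<in> B" for z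
  proof -
    have "(s ^^ (if z = a then 2 else 1)) z = \<tau> z"
      using that N s_a s_N by (auto simp: s_def numeral_2_eq_2 transpose_def)
    then show ?thesis ..
  qed
  have reach_B: "\<exists>j. (s ^^ j) x = y" if xy: "x \<in> B" "y \<in> B" for x y
  proof -
    obtain k where k: "(\<tau> ^^ k) x = y"
      using cyc xy by (auto simp: cyclic_arrangement_def)
    have "\<exists>j. (s ^^ j) (id x) = id ((\<tau> ^^ k) x)"
      by (rule funpow_simulation[where A = B]) (use xy permutes_in_image[OF perm] step in auto)
    then show ?thesis
      using k by simp
  qed
  show ?thesis
    unfolding s_def[symmetric]
  proof (rule cyclic_arrangementI[where c = a])
    show "s permutes insert N B"
      unfolding s_def by (rule permutes_compose) (auto intro: permutes_swap_id permutes_subset[OF perm] a)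
    show "\<exists>j. (s ^^ j) x = a" if "x \<in> insert N B" for x
    proof (cases "x = N")
      case True
      obtain j where "(s ^^ j) (\<tau> a) = a"
        using reach_B permutes_in_image[OF perm] a by blast
      then have "(s ^^ Suc j) x = a"
        using True s_N by (simp add: funpow_Suc_right del: funpow.simps)
      then show ?thesis ..
    qed (use reach_B a that in auto)
    show "\<exists>j. (s ^^ j) a = y" if "y \<in> insert N B" for y
    proof (cases "y = N")
      case True
      then have "(s ^^ 1) a = y"
        using s_a by simp
      then show ?thesis ..
    qed (use reach_B a that in auto)
  qed (use a in auto)
qed

lemma cyclic_arrangement_remove:
  assumes cyc: "cyclic_arrangement B \<sigma>" and N: "N \<in> B" and a: "\<sigma> a = N" "a \<noteq> N"
  shows "cyclic_arrangement (B - {N}) (\<sigma> \<circ> transpose a N)"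
proof -
  define s where "s = \<sigma> \<circ> transpose a N"
  have perm: "\<sigma> permutes B"
    using cyc by (simp add: cyclic_arrangement_def)
  have "a \<in> B"
    using a N permutes_in_image[OF perm, of a] by simp
  then have "s permutes B"
    unfolding s_def by (rule permutes_compose[OF permutes_swap_id perm]) (use N in auto)
  moreover have "s N = N"
    using a by (simp add: s_def)
  ultimately have s_perm: "s permutes (B - {N})"
    by (auto intro: permutes_superset)
  txt \<open>Where the \<open>\<sigma>\<close>-orbit passes through \<open>N\<close>, the \<open>s\<close>-orbit waits at \<open>a\<close> instead.\<close>
  define g where "g z = (if z = N then a else z)" for z
  have step: "\<exists>j. (s ^^ j) (g z) = g (\<sigma> z)" if "z \<in> B" for z
  proof -
    have "\<sigma> z = N \<longleftrightarrow> z = a"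
      using permutes_inj[OF perm] a by (metis injD)
    then have "(s ^^ (if z = a then 0 else 1)) (g z) = g (\<sigma> z)"
      using a by (auto simp: s_def g_def)
    then show ?thesis ..
  qed
  have "\<exists>j. (s ^^ j) x = y" if xy: "x \<in> B - {N}" "y \<in> B - {N}" for x y
  proof -
    obtain k where k: "(\<sigma> ^^ k) x = y"
      using cyc xy by (auto simp: cyclic_arrangement_def)
    have "\<exists>j. (s ^^ j) (g x) = g ((\<sigma> ^^ k) x)"
      by (rule funpow_simulation[where A = B]) (use xy permutes_in_image[OF perm] step in auto)
    then show ?thesis
      using k xy by (simp add: g_def)
  qed
  with s_perm show ?thesis
    by (simp add: cyclic_arrangement_def s_def)
qed

section \<open>Linked cycles\<close>

type_synonym arranged_block = "nat set \<times> (nat \<Rightarrow> nat)"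

definition nonmin :: "nat set \<Rightarrow> nat set" where
  "nonmin B = B - {Min B}"

lemma nearly_disjoint_sym: "nearly_disjoint E F \<longleftrightarrow> nearly_disjoint F E"
  unfolding nearly_disjoint_def by blast

lemma nearly_disjoint_if_disjoint: "E \<inter> F = {} \<Longrightarrow> nearly_disjoint E F"
  unfolding nearly_disjoint_def by blast

lemma nearly_disjoint_Min_neq:
  assumes "nearly_disjoint E F" "finite E" "finite F" "E \<noteq> {}" "F \<noteq> {}"
  shows "Min E \<noteq> Min F"
  using assms Min_in[of E] Min_in[of F] unfolding nearly_disjoint_def by (metis IntI)

lemma nearly_disjoint_nonmin: "nearly_disjoint E F \<Longrightarrow> nonmin E \<inter> nonmin F = {}"
  unfolding nearly_disjoint_def nonmin_def by blast

lemma nearly_disjoint_singleton: "nearly_disjoint {x} F \<Longrightarrow> x \<notin> F"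
  unfolding nearly_disjoint_def by auto

definition linked_blocks :: "arranged_block set \<Rightarrow> bool" where
  "linked_blocks K \<longleftrightarrow>
     (\<forall>p\<in>K. fst p \<noteq> {} \<and> cyclic_arrangement (fst p) (snd p)) \<and> inj_on fst K \<and>
     (\<forall>p\<in>K. \<forall>q\<in>K. fst p \<noteq> fst q \<longrightarrow> nearly_disjoint (fst p) (fst q))"

lemma linked_cycle_iff: "linked_cycle m L \<longleftrightarrow> linked_blocks L \<and> (\<Union>p\<in>L. fst p) = {1..m}"
  unfolding linked_cycle_def linked_partition_def linked_blocks_def
  by (simp add: case_prod_beta) blast

lemma linked_blocks_subset: "linked_blocks L \<Longrightarrow> K \<subseteq> L \<Longrightarrow> linked_blocks K"
  unfolding linked_blocks_def by (meson inj_on_subset subsetD)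

lemma linked_blocks_insert:
  assumes "linked_blocks K" "fst e \<noteq> {}" "cyclic_arrangement (fst e) (snd e)" "fst e \<notin> fst ` K"
    "\<forall>q\<in>K. nearly_disjoint (fst e) (fst q)"
  shows "linked_blocks (insert e K)"
  using assms nearly_disjoint_sym unfolding linked_blocks_def by auto

lemma linked_cycleD:
  assumes "linked_cycle m L" "p \<in> L"
  shows "fst p \<noteq> {}" "fst p \<subseteq> {1..m}" "finite (fst p)" "cyclic_arrangement (fst p) (snd p)"
proof -
  show "fst p \<subseteq> {1..m}"
    using assms by (auto simp: linked_cycle_iff)
  then show "finite (fst p)"
    by (rule finite_subset) simp
  show "fst p \<noteq> {}" "cyclic_arrangement (fst p) (snd p)"
    using assms by (simp_all add: linked_cycle_iff linked_blocks_def)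
qed

lemma linked_cycle_Union: "linked_cycle m L \<Longrightarrow> (\<Union>p\<in>L. fst p) = {1..m}"
  by (simp add: linked_cycle_iff)

lemma linked_cycle_nearly_disjoint:
  "linked_cycle m L \<Longrightarrow> p \<in> L \<Longrightarrow> q \<in> L \<Longrightarrow> p \<noteq> q \<Longrightarrow> nearly_disjoint (fst p) (fst q)"
  unfolding linked_cycle_iff linked_blocks_def by (metis inj_onD)

lemma linked_cycle_Min_in: "linked_cycle m L \<Longrightarrow> p \<in> L \<Longrightarrow> Min (fst p) \<in> fst p"
  using linked_cycleD(1,3) Min_in by blast

lemma linked_cycle_Suc_not_in_block: "linked_cycle m L \<Longrightarrow> p \<in> L \<Longrightarrow> Suc m \<notin> fst p"
  using linked_cycleD(2) by fastforce

lemma finite_linked_cycle: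
  assumes "linked_cycle m L"
  shows "finite L"
proof -
  have "finite (fst ` L)"
    using linked_cycle_Union[OF assms] by (metis finite_UnionD finite_atLeastAtMost)
  then show ?thesis
    using assms by (auto simp: linked_cycle_iff linked_blocks_def dest: finite_imageD)
qed

lemma finite_linked_cycles: "finite (linked_cycles m)"
proof (rule finite_subset)
  show "linked_cycles m \<subseteq> Pow (Pow {1..m} \<times> {\<sigma>. \<sigma> permutes {1..m}})"
  proof (intro subsetI PowI)
    fix L p assume "L \<in> linked_cycles m" "p \<in> L"
    then have "fst p \<subseteq> {1..m}" "snd p permutes fst p"
      using linked_cycleD(2,4)[of m L p] by (auto simp: linked_cycles_def cyclic_arrangement_def)
    then show "p \<in> Pow {1..m} \<times> {\<sigma>. \<sigma> permutes {1..m}}"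
      using permutes_subset by (cases p) auto
  qed
qed (simp add: finite_permutations)

definition nonmins :: "arranged_block set \<Rightarrow> nat set" where
  "nonmins L = (\<Union>p\<in>L. nonmin (fst p))"

definition block_mins :: "arranged_block set \<Rightarrow> nat set" where
  "block_mins L = (\<lambda>p. Min (fst p)) ` L"

context
  fixes m :: nat and L :: "arranged_block set"
  assumes lc: "linked_cycle m L"
begin

lemma nonmins_subset: "nonmins L \<subseteq> {2..m}"
proof
  fix x assume "x \<in> nonmins L"
  then obtain p where p: "p \<in> L" "x \<in> fst p" "x \<noteq> Min (fst p)"
    by (auto simp: nonmins_def nonmin_def)
  have "Min (fst p) < x"
    using Min_le[OF linked_cycleD(3)[OF lc p(1)] p(2)] p(3) by simp
  moreover have "Min (fst p) \<in> {1..m}" "x \<in> {1..m}"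
    using linked_cycleD(2)[OF lc p(1)] linked_cycle_Min_in[OF lc p(1)] p(2) by auto
  ultimately show "x \<in> {2..m}"
    by auto
qed

lemma finite_nonmins: "finite (nonmins L)"
  using nonmins_subset finite_subset by blast

lemma Suc_not_in_nonmins: "Suc m \<notin> nonmins L"
  using nonmins_subset by auto

lemma card_block_mins: "card (block_mins L) = card L"
proof -
  have "inj_on (\<lambda>p. Min (fst p)) L"
  proof (rule inj_onI, rule ccontr)
    fix p q assume pq: "p \<in> L" "q \<in> L" and "Min (fst p) = Min (fst q)" "p \<noteq> q"
    then show False
      using nearly_disjoint_Min_neq[OF linked_cycle_nearly_disjoint[OF lc pq]]
        linked_cycleD(1,3)[OF lc pq(1)] linked_cycleD(1,3)[OF lc pq(2)] by simp
  qed
  then show ?thesis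
    by (simp add: block_mins_def card_image)
qed

lemma sum_card_blocks: "(\<Sum>p\<in>L. card (fst p)) = card L + card (nonmins L)"
proof -
  have "(\<Sum>p\<in>L. card (fst p)) = (\<Sum>p\<in>L. 1 + card (nonmin (fst p)))"
  proof (rule sum.cong[OF refl])
    fix p assume p: "p \<in> L"
    show "card (fst p) = 1 + card (nonmin (fst p))"
      using linked_cycleD(1,3)[OF lc p] linked_cycle_Min_in[OF lc p]
      by (simp add: nonmin_def card_Diff_singleton card_gt_0_iff)
  qed
  also have "\<dots> = card L + (\<Sum>p\<in>L. card (nonmin (fst p)))"
    by (simp only: sum.distrib) simp
  also have "(\<Sum>p\<in>L. card (nonmin (fst p))) = card (nonmins L)"
    unfolding nonmins_def
    using finite_linked_cycle[OF lc] linked_cycleD(3)[OF lc]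
      linked_cycle_nearly_disjoint[OF lc] nearly_disjoint_nonmin
    by (intro card_UN_disjoint[symmetric]) (auto simp: nonmin_def)
  finally show ?thesis .
qed

lemma card_nonmins_Diff_block_mins: "card (nonmins L - block_mins L) + card L = m"
proof -
  have "nonmins L \<union> block_mins L = {1..m}"
  proof
    have "Min (fst p) \<in> {1..m}" if "p \<in> L" for p
      using linked_cycleD(2)[OF lc that] linked_cycle_Min_in[OF lc that] by blast
    then show "nonmins L \<union> block_mins L \<subseteq> {1..m}"
      using nonmins_subset by (auto simp: block_mins_def)
    show "{1..m} \<subseteq> nonmins L \<union> block_mins L"
      using linked_cycle_Union[OF lc] by (auto simp: nonmins_def nonmin_def block_mins_def)
  qed
  moreover have "finite (block_mins L)"
    using finite_linked_cycle[OF lc] by (simp add: block_mins_def)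
  ultimately have "card (nonmins L - block_mins L) + card (block_mins L) = m"
    using card_Un_disjoint[of "nonmins L - block_mins L" "block_mins L"] finite_nonmins by auto
  then show ?thesis
    using card_block_mins by simp
qed

end

section \<open>Adding the element \<open>m + 1\<close> to a linked cycle on \<open>[m]\<close>\<close>

lemma Min_insert_greater:
  assumes "finite B" "B \<noteq> {}" "\<forall>x\<in>B. x < N"
  shows "Min (insert N B) = Min B"
proof -
  have "Min B < N"
    using assms by simp
  then show ?thesis
    using Min_insert[OF assms(1,2)] by simp
qed

lemma nearly_disjoint_insert_greater:
  assumes "nearly_disjoint B F" "finite B" "B \<noteq> {}" "\<forall>x\<in>B. x < N" "N \<notin> F"
  shows "nearly_disjoint (insert N B) F"
proof -
  have "card (insert N B) > 1"
    using assms(2-4) by (auto simp: card_gt_0_iff)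
  then show ?thesis
    using assms Min_insert_greater[OF assms(2-4)] unfolding nearly_disjoint_def by auto
qed

lemma nearly_disjoint_remove_greater:
  assumes "nearly_disjoint (insert N B) F" "finite B" "B \<noteq> {}" "\<forall>x\<in>B. x < N"
    and not_pair: "\<And>x. B = {x} \<Longrightarrow> x \<notin> F"
  shows "nearly_disjoint B F"
  unfolding nearly_disjoint_def
proof
  fix x assume x: "x \<in> B \<inter> F"
  have "card B \<noteq> 1"
    using x not_pair by (auto simp: card_1_singleton_iff)
  moreover have "card B \<noteq> 0"
    using assms(2,3) by simp
  ultimately have "card B > 1"
    by linarith
  then show "x = Min B \<and> card B > 1 \<and> x \<noteq> Min F \<or> x = Min F \<and> card F > 1 \<and> x \<noteq> Min B"
    using x assms(1) Min_insert_greater[OF assms(2-4)] unfolding nearly_disjoint_def by auto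
qed

definition add_singleton :: "arranged_block set \<Rightarrow> nat \<Rightarrow> arranged_block set" where
  "add_singleton L N = insert ({N}, id) L"

definition add_pair :: "arranged_block set \<Rightarrow> nat \<Rightarrow> nat \<Rightarrow> arranged_block set" where
  "add_pair L i N = insert ({i, N}, transpose i N) L"

definition add_after :: "arranged_block set \<Rightarrow> arranged_block \<Rightarrow> nat \<Rightarrow> nat \<Rightarrow> arranged_block set" where
  "add_after L p a N = insert (insert N (fst p), snd p \<circ> transpose a N) (L - {p})"

lemma atLeastAtMost_Suc_insert: "{1..Suc m} = insert (Suc m) {1..m}"
  by (auto simp: atLeastAtMostSuc_conv)

context
  fixes m :: nat and L :: "arranged_block set"
  assumes lc: "linked_cycle m L"
begin

lemma linked_cycle_add_singleton: "linked_cycle (Suc m) (add_singleton L (Suc m))"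
proof -
  have "{Suc m} \<notin> fst ` L" "\<forall>q\<in>L. nearly_disjoint {Suc m} (fst q)"
    using linked_cycle_Suc_not_in_block[OF lc] by (blast intro: nearly_disjoint_if_disjoint)+
  then have "linked_blocks (insert ({Suc m}, id) L)"
    using lc by (intro linked_blocks_insert) (simp_all add: linked_cycle_iff cyclic_arrangement_singleton_iff)
  then show ?thesis
    using linked_cycle_Union[OF lc] by (auto simp: linked_cycle_iff add_singleton_def atLeastAtMost_Suc_insert)
qed

lemma linked_cycle_add_pair:
  assumes i: "i \<in> nonmins L - block_mins L"
  shows "linked_cycle (Suc m) (add_pair L i (Suc m))"
proof -
  have i_le: "i \<in> {1..m}"
    using i nonmins_subset[OF lc] by auto
  have "nearly_disjoint {i, Suc m} (fst q)" if q: "q \<in> L" for q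
  proof -
    have "Min (fst q) \<noteq> i"
      using i q by (auto simp: block_mins_def)
    moreover have "Suc m \<notin> fst q"
      using linked_cycle_Suc_not_in_block[OF lc q] by simp
    ultimately show ?thesis
      using i_le unfolding nearly_disjoint_def by auto
  qed
  moreover have "{i, Suc m} \<notin> fst ` L"
    using linked_cycle_Suc_not_in_block[OF lc] by blast
  ultimately have "linked_blocks (insert ({i, Suc m}, transpose i (Suc m)) L)"
    using lc i_le
    by (intro linked_blocks_insert) (simp_all add: linked_cycle_iff cyclic_arrangement_doubleton_iff)
  then show ?thesis
    using linked_cycle_Union[OF lc] i_le by (auto simp: linked_cycle_iff add_pair_def atLeastAtMost_Suc_insert)
qed

lemma linked_cycle_add_after:
  assumes p: "p \<in> L" and a: "a \<in> fst p"
  shows "linked_cycle (Suc m) (add_after L p a (Suc m))"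
proof -
  have less: "\<forall>x\<in>fst p. x < Suc m"
    using linked_cycleD(2)[OF lc p] by auto
  have "nearly_disjoint (insert (Suc m) (fst p)) (fst q)" if q: "q \<in> L - {p}" for q
  proof (rule nearly_disjoint_insert_greater)
    show "nearly_disjoint (fst p) (fst q)"
      using linked_cycle_nearly_disjoint[OF lc p, of q] q by auto
    show "Suc m \<notin> fst q"
      using linked_cycle_Suc_not_in_block[OF lc] q by auto
  qed (use linked_cycleD(1,3)[OF lc p] less in auto)
  moreover have "cyclic_arrangement (insert (Suc m) (fst p)) (snd p \<circ> transpose a (Suc m))"
    using cyclic_arrangement_insert[OF linked_cycleD(4)[OF lc p] a] less by blast
  moreover have "linked_blocks (L - {p})"
    using lc by (auto simp: linked_cycle_iff intro: linked_blocks_subset)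
  ultimately have "linked_blocks (add_after L p a (Suc m))"
    unfolding add_after_def using linked_cycle_Suc_not_in_block[OF lc]
    by (intro linked_blocks_insert) fastforce+
  moreover have "fst p \<union> (\<Union>q\<in>L - {p}. fst q) = {1..m}"
    using linked_cycle_Union[OF lc] p by blast
  ultimately show ?thesis
    by (auto simp: linked_cycle_iff add_after_def atLeastAtMost_Suc_insert)
qed

lemma card_nonmins_add_pair:
  assumes "i \<in> nonmins L"
  shows "card (nonmins (add_pair L i (Suc m))) = Suc (card (nonmins L))"
proof -
  have "i < Suc m"
    using assms nonmins_subset[OF lc] by auto
  then have "nonmins (add_pair L i (Suc m)) = insert (Suc m) (nonmins L)"
    by (auto simp: add_pair_def nonmins_def nonmin_def)
  then show ?thesis
    using finite_nonmins[OF lc] Suc_not_in_nonmins[OF lc] by simp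
qed

lemma card_nonmins_add_after:
  assumes p: "p \<in> L"
  shows "card (nonmins (add_after L p a (Suc m))) = Suc (card (nonmins L))"
proof -
  have less: "\<forall>x\<in>fst p. x < Suc m"
    using linked_cycleD(2)[OF lc p] by auto
  then have "nonmin (insert (Suc m) (fst p)) = insert (Suc m) (nonmin (fst p))"
    using Min_insert_greater[OF linked_cycleD(3,1)[OF lc p] less] linked_cycle_Min_in[OF lc p] less
    by (auto simp: nonmin_def)
  moreover have "nonmins L = nonmin (fst p) \<union> nonmins (L - {p})"
    using p by (auto simp: nonmins_def)
  ultimately have "nonmins (add_after L p a (Suc m)) = insert (Suc m) (nonmins L)"
    by (simp add: add_after_def nonmins_def)
  then show ?thesis
    using finite_nonmins[OF lc] Suc_not_in_nonmins[OF lc] by simp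
qed

end

lemma nonmins_add_singleton: "nonmins (add_singleton L N) = nonmins L"
  by (simp add: add_singleton_def nonmins_def nonmin_def)

text \<open>Extensions of linked cycles and of partitions are inverted by locating the unique
  block that contains the new element.\<close>

lemma insert_eq_insertD:
  assumes "insert e K = insert e' K'" "P e" "P e'" "\<forall>q\<in>K. \<not> P q" "\<forall>q\<in>K'. \<not> P q"
  shows "e = e' \<and> K = K'"
proof -
  have "e = e'"
    using assms(1,2,5) by blast
  moreover have "e \<notin> K" "e \<notin> K'"
    using assms(2,4,5) by auto
  ultimately show ?thesis
    using assms(1) by (simp add: insert_ident)
qed

context
  fixes m :: nat and L1 L2 :: "arranged_block set"
  assumes lc1: "linked_cycle m L1" and lc2: "linked_cycle m L2"
begin

private lemma no_block_contains_Suc: "\<forall>q\<in>L1 - X. Suc m \<notin> fst q" "\<forall>q\<in>L2 - X. Suc m \<notin> fst q"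
  using linked_cycle_Suc_not_in_block[OF lc1] linked_cycle_Suc_not_in_block[OF lc2] by auto

lemma add_singleton_inj:
  assumes "add_singleton L1 (Suc m) = add_singleton L2 (Suc m)"
  shows "L1 = L2"
  using insert_eq_insertD[OF assms[unfolded add_singleton_def], where P = "\<lambda>q. Suc m \<in> fst q"]
    no_block_contains_Suc[of "{}"] by simp

lemma add_pair_inj:
  assumes "add_pair L1 i1 (Suc m) = add_pair L2 i2 (Suc m)" "i1 \<noteq> Suc m" "i2 \<noteq> Suc m"
  shows "L1 = L2 \<and> i1 = i2"
  using insert_eq_insertD[OF assms(1)[unfolded add_pair_def], where P = "\<lambda>q. Suc m \<in> fst q"]
    no_block_contains_Suc[of "{}"] assms(2,3)
  by (auto simp: doubleton_eq_iff)

lemma add_after_inj: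
  assumes eq: "add_after L1 p1 a1 (Suc m) = add_after L2 p2 a2 (Suc m)"
    and p1: "p1 \<in> L1" "a1 \<in> fst p1" and p2: "p2 \<in> L2" "a2 \<in> fst p2"
  shows "L1 = L2 \<and> p1 = p2 \<and> a1 = a2"
proof -
  have N1: "Suc m \<notin> fst p1" and N2: "Suc m \<notin> fst p2"
    using linked_cycle_Suc_not_in_block lc1 lc2 p1 p2 by auto
  have perm1: "snd p1 permutes fst p1" and perm2: "snd p2 permutes fst p2"
    using linked_cycleD(4) lc1 lc2 p1(1) p2(1) by (auto simp: cyclic_arrangement_def)
  have "insert (Suc m) (fst p1) = insert (Suc m) (fst p2)"
    and arrangements: "snd p1 \<circ> transpose a1 (Suc m) = snd p2 \<circ> transpose a2 (Suc m)"
    and rest: "L1 - {p1} = L2 - {p2}"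
    using insert_eq_insertD[OF eq[unfolded add_after_def], where P = "\<lambda>q. Suc m \<in> fst q"] no_block_contains_Suc
    by auto
  then have fst_eq: "fst p1 = fst p2"
    using N1 N2 by (simp add: insert_ident)
  have "a1 = a2"
  proof (rule ccontr)
    assume "a1 \<noteq> a2"
    moreover have "a1 \<noteq> Suc m"
      using p1(2) N1 by auto
    ultimately have "(snd p2 \<circ> transpose a2 (Suc m)) a1 = snd p2 a1"
      by simp
    moreover have "snd p2 a1 \<in> fst p2"
      using permutes_in_image[OF perm2] p1(2) fst_eq by simp
    moreover have "(snd p1 \<circ> transpose a1 (Suc m)) a1 = Suc m"
      using permutes_not_in[OF perm1 N1] by simp
    ultimately show False
      using arrangements N2 by simp
  qed
  moreover have "snd p1 = snd p2"
    using arg_cong[OF arrangements, of "\<lambda>f. f \<circ> transpose a1 (Suc m)"] \<open>a1 = a2\<close>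
    by (simp add: comp_assoc)
  then have "p1 = p2"
    using fst_eq by (simp add: prod_eq_iff)
  moreover from this have "L1 = L2"
    using rest p1(1) p2(1) by (metis insert_Diff)
  ultimately show ?thesis
    by simp
qed


lemma add_singleton_neq_add_pair: "i \<noteq> Suc m \<Longrightarrow> add_singleton L1 (Suc m) \<noteq> add_pair L2 i (Suc m)"
  using insert_eq_insertD[of "({Suc m}, id)" L1 "({i, Suc m}, transpose i (Suc m))" L2 "\<lambda>q. Suc m \<in> fst q"]
    no_block_contains_Suc[of "{}"]
  by (auto simp: add_singleton_def add_pair_def doubleton_eq_iff)

lemma add_singleton_neq_add_after:
  assumes "p \<in> L2"
  shows "add_singleton L1 (Suc m) \<noteq> add_after L2 p a (Suc m)"
proof
  assume "add_singleton L1 (Suc m) = add_after L2 p a (Suc m)"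
  then have "{Suc m} = insert (Suc m) (fst p)"
    using insert_eq_insertD[where P = "\<lambda>q. Suc m \<in> fst q"] no_block_contains_Suc
    unfolding add_singleton_def add_after_def by (metis fst_conv insertI1 Diff_empty)
  then show False
    using linked_cycleD(1)[OF lc2 assms] linked_cycle_Suc_not_in_block[OF lc2 assms] by auto
qed

lemma add_pair_neq_add_after:
  assumes i: "i \<in> nonmins L1" and p: "p \<in> L2"
  shows "add_pair L1 i (Suc m) \<noteq> add_after L2 p a (Suc m)"
proof
  assume eq: "add_pair L1 i (Suc m) = add_after L2 p a (Suc m)"
  have "{i, Suc m} = insert (Suc m) (fst p)" and rest: "L1 = L2 - {p}"
    using insert_eq_insertD[OF eq[unfolded add_pair_def add_after_def], where P = "\<lambda>q. Suc m \<in> fst q"]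
      no_block_contains_Suc by auto
  moreover have "i \<noteq> Suc m"
    using i Suc_not_in_nonmins[OF lc1] by auto
  ultimately have p_eq: "fst p = {i}"
    using linked_cycle_Suc_not_in_block[OF lc2 p] by auto
  obtain q where q: "q \<in> L1" "i \<in> nonmin (fst q)"
    using i by (auto simp: nonmins_def)
  then have "q \<in> L2" "q \<noteq> p"
    using rest p_eq by (auto simp: nonmin_def)
  then have "nearly_disjoint {i} (fst q)"
    using linked_cycle_nearly_disjoint[OF lc2 p] p_eq by metis
  then show False
    using nearly_disjoint_singleton q(2) by (auto simp: nonmin_def)
qed

end

context
  fixes m :: nat and L :: "arranged_block set" and p0 :: arranged_block
  assumes lc: "linked_cycle (Suc m) L" and p0: "p0 \<in> L" "Suc m \<in> fst p0"
begin

text \<open>In a block of \<open>[m + 1]\<close> with at least two elements, \<open>m + 1\<close> is not the minimum, so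
  near-disjointness forbids it from lying in two blocks.\<close>

lemma block_containing_Suc_unique:
  assumes q: "q \<in> L" "Suc m \<in> fst q"
  shows "q = p0"
proof (rule ccontr)
  have Min_less: "Min (fst r) < Suc m" if r: "r \<in> L" "card (fst r) > 1" for r
  proof -
    have "\<not> card (fst r) \<le> Suc 0"
      using r(2) by simp
    then obtain x y where "x \<in> fst r" "y \<in> fst r" "x \<noteq> y"
      using card_le_Suc0_iff_eq[OF linked_cycleD(3)[OF lc r(1)]] by blast
    then have "Min (fst r) \<le> x" "Min (fst r) \<le> y" "x \<le> Suc m" "y \<le> Suc m"
      using linked_cycleD(2,3)[OF lc r(1)] by auto
    with \<open>x \<noteq> y\<close> show ?thesis
      by linarith
  qed
  assume "q \<noteq> p0"
  then have "nearly_disjoint (fst q) (fst p0)"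
    using linked_cycle_nearly_disjoint[OF lc q(1) p0(1)] by simp
  moreover have "Suc m \<in> fst q \<inter> fst p0"
    using q p0 by simp
  ultimately have "Suc m = Min (fst q) \<and> card (fst q) > 1 \<or> Suc m = Min (fst p0) \<and> card (fst p0) > 1"
    unfolding nearly_disjoint_def by blast
  then show False
    using Min_less[OF q(1)] Min_less[OF p0(1)] by auto
qed

lemma other_blocks_subset:
  assumes q: "q \<in> L - {p0}"
  shows "fst q \<subseteq> {1..m}"
proof -
  have "Suc m \<notin> fst q"
    using block_containing_Suc_unique q by blast
  then show ?thesis
    using linked_cycleD(2)[OF lc, of q] q unfolding atLeastAtMost_Suc_insert by blast
qed

lemma other_blocks_Un: "(fst p0 - {Suc m}) \<union> (\<Union>q\<in>L - {p0}. fst q) = {1..m}"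
proof -
  have "Suc m \<notin> (\<Union>q\<in>L - {p0}. fst q)"
    using other_blocks_subset by fastforce
  then have "(fst p0 - {Suc m}) \<union> (\<Union>q\<in>L - {p0}. fst q) = (\<Union>q\<in>L. fst q) - {Suc m}"
    using p0(1) by blast
  also have "\<dots> = {1..m}"
    using linked_cycle_Union[OF lc] by (auto simp: atLeastAtMost_Suc_insert)
  finally show ?thesis .
qed

lemma linked_blocks_others: "linked_blocks (L - {p0})"
  using lc linked_blocks_subset[of L "L - {p0}"] by (simp add: linked_cycle_iff)

lemma remove_singleton_block:
  assumes "fst p0 = {Suc m}"
  shows "linked_cycle m (L - {p0})" "L = add_singleton (L - {p0}) (Suc m)"
proof -
  show "linked_cycle m (L - {p0})"
    using linked_blocks_others other_blocks_Un assms by (simp add: linked_cycle_iff)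
  have "snd p0 = id"
    using linked_cycleD(4)[OF lc p0(1)] assms by (simp add: cyclic_arrangement_singleton_iff)
  then have "p0 = ({Suc m}, id)"
    using assms by (simp add: prod_eq_iff)
  then show "L = add_singleton (L - {p0}) (Suc m)"
    using p0(1) by (simp add: add_singleton_def insert_absorb)
qed

lemma remove_pair_block:
  assumes p0_eq: "fst p0 = {i, Suc m}" and q: "q \<in> L - {p0}" "i \<in> fst q"
  shows "linked_cycle m (L - {p0})" "i \<in> nonmins (L - {p0}) - block_mins (L - {p0})"
    "L = add_pair (L - {p0}) i (Suc m)"
proof -
  have i_le: "i \<in> {1..m}"
    using other_blocks_subset[OF q(1)] q(2) by auto
  have "(fst p0 - {Suc m}) \<subseteq> (\<Union>q\<in>L - {p0}. fst q)"
    using p0_eq q by auto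
  then show lc': "linked_cycle m (L - {p0})"
    using linked_blocks_others other_blocks_Un by (auto simp: linked_cycle_iff)
  txt \<open>\<open>i\<close> is the minimum of \<open>fst p0\<close>, hence of no other block containing it.\<close>
  have not_Min: "i \<noteq> Min (fst r)" if r: "r \<in> L - {p0}" "i \<in> fst r" for r
  proof -
    have "nearly_disjoint (fst r) (fst p0)"
      using linked_cycle_nearly_disjoint[OF lc _ p0(1)] r(1) by blast
    moreover have "Min (fst p0) = i"
      using p0_eq i_le by simp
    ultimately show ?thesis
      using r(2) p0_eq unfolding nearly_disjoint_def by auto
  qed
  have "i \<in> nonmin (fst q)"
    using q not_Min[OF q] by (simp add: nonmin_def)
  then show "i \<in> nonmins (L - {p0}) - block_mins (L - {p0})"
    using q(1) not_Min linked_cycle_Min_in[OF lc'] by (auto simp: nonmins_def block_mins_def)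
  have "snd p0 = transpose i (Suc m)"
    using linked_cycleD(4)[OF lc p0(1)] p0_eq i_le by (simp add: cyclic_arrangement_doubleton_iff)
  then have "p0 = ({i, Suc m}, transpose i (Suc m))"
    using p0_eq by (simp add: prod_eq_iff)
  then show "L = add_pair (L - {p0}) i (Suc m)"
    using p0(1) by (simp add: add_pair_def insert_absorb)
qed


lemma remove_from_block:
  assumes not_singleton: "fst p0 \<noteq> {Suc m}"
    and not_pair: "\<And>i q. fst p0 = {i, Suc m} \<Longrightarrow> q \<in> L - {p0} \<Longrightarrow> i \<notin> fst q"
  obtains p a where "linked_cycle m (insert p (L - {p0}))" "a \<in> fst p"
    "L = add_after (insert p (L - {p0})) p a (Suc m)"
proof -
  obtain B0 \<sigma>0 where p0_eq: "p0 = (B0, \<sigma>0)"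
    by (cases p0)
  define B where "B = B0 - {Suc m}"
  have cyc0: "cyclic_arrangement B0 \<sigma>0" and N: "Suc m \<in> B0"
    using linked_cycleD(4)[OF lc p0(1)] p0(2) by (simp_all add: p0_eq)
  have B0_eq: "B0 = insert (Suc m) B"
    using N by (auto simp: B_def)
  have B_ne: "B \<noteq> {}"
    using not_singleton B0_eq by (auto simp: p0_eq)
  have fin: "finite B" and less: "\<forall>x\<in>B. x < Suc m"
    using linked_cycleD(2,3)[OF lc p0(1)] by (auto simp: p0_eq B_def)
  obtain a where "a \<in> B0 - {Suc m}" and a_to_N: "\<sigma>0 a = Suc m"
    using cyclic_arrangement_predecessor[OF cyc0 N] not_singleton by (auto simp: p0_eq)
  then have a_in: "a \<in> B" and a_ne: "a \<noteq> Suc m"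
    by (simp_all add: B_def)
  define p where "p = (B, \<sigma>0 \<circ> transpose a (Suc m))"
  have nd: "nearly_disjoint B (fst r)" if r: "r \<in> L - {p0}" for r
  proof (rule nearly_disjoint_remove_greater[OF _ fin B_ne less])
    show "nearly_disjoint (insert (Suc m) B) (fst r)"
      using linked_cycle_nearly_disjoint[OF lc p0(1), of r] r B0_eq by (auto simp: p0_eq)
    show "x \<notin> fst r" if "B = {x}" for x
      using not_pair[OF _ r] that B0_eq by (auto simp: p0_eq)
  qed
  have "B \<notin> fst ` (L - {p0})"
    using nd nearly_disjoint_Min_neq[OF _ fin fin B_ne B_ne] by auto
  then have p_new: "p \<notin> L - {p0}"
    by (force simp: p_def)
  have "linked_blocks (insert p (L - {p0}))"
    using linked_blocks_others B_ne cyclic_arrangement_remove[OF cyc0 N a_to_N a_ne] nd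
      \<open>B \<notin> fst ` (L - {p0})\<close>
    by (intro linked_blocks_insert) (simp_all add: p_def B_def)
  then have "linked_cycle m (insert p (L - {p0}))"
    using other_blocks_Un by (simp add: linked_cycle_iff p_def p0_eq B_def)
  moreover have "a \<in> fst p"
    using a_in by (simp add: p_def)
  moreover have "add_after (insert p (L - {p0})) p a (Suc m) = insert (B0, \<sigma>0) (L - {p0})"
    using p_new B0_eq by (simp add: add_after_def p_def comp_assoc)
  then have "L = add_after (insert p (L - {p0})) p a (Suc m)"
    using p0(1) by (simp add: p0_eq[symmetric] insert_absorb)
  ultimately show thesis
    by (rule that)
qed

end

lemma linked_cycle_Suc_cases:
  assumes lc: "linked_cycle (Suc m) L"
  obtains (singleton) L' where "linked_cycle m L'" "L = add_singleton L' (Suc m)"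
  | (pair) L' i where "linked_cycle m L'" "i \<in> nonmins L' - block_mins L'" "L = add_pair L' i (Suc m)"
  | (after) L' p a where "linked_cycle m L'" "p \<in> L'" "a \<in> fst p" "L = add_after L' p a (Suc m)"
proof -
  have "Suc m \<in> (\<Union>p\<in>L. fst p)"
    using linked_cycle_Union[OF lc] by simp
  then obtain p0 where p0: "p0 \<in> L" "Suc m \<in> fst p0"
    by blast
  consider (one) "fst p0 = {Suc m}"
    | (two) i q where "fst p0 = {i, Suc m}" "q \<in> L - {p0}" "i \<in> fst q"
    | (more) "fst p0 \<noteq> {Suc m}" "\<And>i q. fst p0 = {i, Suc m} \<Longrightarrow> q \<in> L - {p0} \<Longrightarrow> i \<notin> fst q"
    by metis
  then show thesis
  proof cases
    case one
    show ?thesis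
      by (rule singleton[OF remove_singleton_block[OF lc p0 one]])
  next
    case two
    show ?thesis
      by (rule pair[OF remove_pair_block[OF lc p0 two]])
  next
    case more
    obtain p a where "linked_cycle m (insert p (L - {p0}))" "a \<in> fst p"
      "L = add_after (insert p (L - {p0})) p a (Suc m)"
      using remove_from_block[OF lc p0 more] .
    then show ?thesis
      by (intro after) simp_all
  qed
qed

section \<open>Partitions into blocks of size at most two\<close>

definition pair_partitions :: "nat set \<Rightarrow> nat \<Rightarrow> nat set set set" where
  "pair_partitions S b = {P. partition_on S P \<and> card P = b \<and> (\<forall>B\<in>P. card B \<le> 2)}"

fun pair_partition_count :: "nat \<Rightarrow> nat \<Rightarrow> nat" where
  "pair_partition_count 0 b = (if b = 0 then 1 else 0)"
| "pair_partition_count (Suc s) 0 = 0"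
| "pair_partition_count (Suc 0) (Suc b) = pair_partition_count 0 b"
| "pair_partition_count (Suc (Suc s)) (Suc b) =
     pair_partition_count (Suc s) b + Suc s * pair_partition_count s b"

lemma pair_partition_count_eq_0: "s < b \<Longrightarrow> pair_partition_count s b = 0"
  by (induction s b rule: pair_partition_count.induct) auto

lemma finite_pair_partitions: "finite S \<Longrightarrow> finite (pair_partitions S b)"
  by (rule finite_subset[OF _ finitely_many_partition_on]) (auto simp: pair_partitions_def)

lemma pair_partitions_empty: "pair_partitions {} b = (if b = 0 then {{}} else {})"
  by (auto simp: pair_partitions_def partition_on_empty)

lemma pair_partitions_0:
  assumes "finite S" "S \<noteq> {}"
  shows "pair_partitions S 0 = {}"
proof -
  have "P = {}" if "partition_on S P" "card P = 0" for P
    using that finite_elements[OF assms(1)] by simp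
  then show ?thesis
    using assms(2) by (auto simp: pair_partitions_def partition_on_def)
qed

lemma insert_in_pair_partitions:
  assumes "finite T" "Q \<in> pair_partitions T b" "B \<inter> T = {}" "B \<noteq> {}" "card B \<le> 2"
  shows "insert B Q \<in> pair_partitions (T \<union> B) (Suc b)"
proof -
  have Q: "partition_on T Q"
    using assms(2) by (simp add: pair_partitions_def)
  then have "disjnt B (\<Union>Q)" "B \<notin> Q"
    using assms(3,4) partition_onD1[OF Q] by (auto simp: disjnt_def)
  moreover have "T \<union> B - B = T"
    using assms(3) by blast
  ultimately show ?thesis
    using assms Q finite_elements[OF assms(1) Q] by (auto simp: pair_partitions_def partition_on_insert)
qed

lemma remove_from_pair_partitions:
  assumes "finite S" "P \<in> pair_partitions S (Suc b)" "B \<in> P"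
  shows "P - {B} \<in> pair_partitions (S - B) b"
proof -
  have P: "partition_on S P"
    using assms(2) by (simp add: pair_partitions_def)
  have "disjnt B (\<Union>(P - {B}))"
    using partition_onD2[OF P] assms(3) by (auto simp: disjnt_def disjoint_def)
  then have "partition_on (S - B) (P - {B})"
    using partition_on_insert[of B "P - {B}" S] P assms(3) by (simp add: insert_absorb)
  then show ?thesis
    using assms finite_elements[OF assms(1) P] by (auto simp: pair_partitions_def)
qed

lemma card_le_2_cases:
  assumes "finite B" "card B \<le> 2" "x \<in> B"
  obtains "B = {x}" | y where "y \<noteq> x" "B = {x, y}"
proof -
  have "card (B - {x}) \<le> 1"
    using assms by simp
  then have "B - {x} = {} \<or> (\<exists>y. B - {x} = {y})"
    using assms(1) by (auto simp: le_Suc_eq card_1_singleton_iff)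
  then show thesis
    using assms(3) that by blast
qed

lemma pair_partitions_Suc:
  assumes "finite S" "x \<in> S"
  shows "pair_partitions S (Suc b) =
    insert {x} ` pair_partitions (S - {x}) b \<union>
    (\<Union>y\<in>S - {x}. insert {x, y} ` pair_partitions (S - {x, y}) b)"
    (is "_ = ?single \<union> ?pairs")
proof (intro equalityI subsetI)
  fix P assume P: "P \<in> pair_partitions S (Suc b)"
  then have part: "partition_on S P"
    by (simp add: pair_partitions_def)
  then obtain B where B: "B \<in> P" "x \<in> B"
    using assms(2) partition_onD1 by blast
  have "B \<subseteq> S"
    using B(1) partition_onD1[OF part] by auto
  then have B_small: "finite B" "card B \<le> 2"
    using assms(1) P B(1) finite_subset by (auto simp: pair_partitions_def)
  have "P - {B} \<in> pair_partitions (S - B) b" "P = insert B (P - {B})"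
    using remove_from_pair_partitions[OF assms(1) P B(1)] B(1) by auto
  then have P_in: "P \<in> insert B ` pair_partitions (S - B) b"
    by (rule rev_image_eqI)
  show "P \<in> ?single \<union> ?pairs"
  proof (cases rule: card_le_2_cases[OF B_small B(2)])
    case 1
    then show ?thesis
      using P_in by blast
  next
    case (2 y)
    then have "y \<in> S - {x}"
      using \<open>B \<subseteq> S\<close> by auto
    then show ?thesis
      using P_in 2 by blast
  qed
next
  fix P assume "P \<in> ?single \<union> ?pairs"
  then show "P \<in> pair_partitions S (Suc b)"
  proof (elim UnE UN_E imageE)
    fix Q assume "Q \<in> pair_partitions (S - {x}) b" "P = insert {x} Q"
    then show ?thesis
      using insert_in_pair_partitions[of "S - {x}" Q b "{x}"] assms by (simp add: insert_absorb)
  next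
    fix y Q assume "y \<in> S - {x}" "Q \<in> pair_partitions (S - {x, y}) b" "P = insert {x, y} Q"
    moreover have "S - {x, y} \<union> {x, y} = S"
      using \<open>y \<in> S - {x}\<close> assms(2) by auto
    ultimately show ?thesis
      using insert_in_pair_partitions[of "S - {x, y}" Q b "{x, y}"] assms by (simp add: card_insert_if)
  qed
qed

lemma pair_partitions_block_subset: "Q \<in> pair_partitions T b \<Longrightarrow> B \<in> Q \<Longrightarrow> B \<subseteq> T"
  by (auto simp: pair_partitions_def partition_on_def)

lemma card_pair_partitions_Suc:
  assumes S: "finite S" and x: "x \<in> S"
  shows "card (pair_partitions S (Suc b)) =
    card (pair_partitions (S - {x}) b) + (\<Sum>y\<in>S - {x}. card (pair_partitions (S - {x, y}) b))"
proof -
  let ?single = "insert {x} ` pair_partitions (S - {x}) b"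
  let ?pair = "\<lambda>y. insert {x, y} ` pair_partitions (S - {x, y}) b"
  have split: "B1 = B2 \<and> Q1 = Q2"
    if "insert B1 Q1 = insert B2 Q2" "x \<in> B1" "x \<in> B2"
      "Q1 \<in> pair_partitions T1 b" "Q2 \<in> pair_partitions T2 b" "x \<notin> T1" "x \<notin> T2"
    for B1 B2 Q1 Q2 T1 T2
  proof (rule insert_eq_insertD[where P = "\<lambda>B. x \<in> B", OF that(1-3)])
    show "\<forall>q\<in>Q1. x \<notin> q" "\<forall>q\<in>Q2. x \<notin> q"
      using that(4-7) pair_partitions_block_subset by blast+
  qed
  have inj: "inj_on (insert B) (pair_partitions T b)" if "x \<in> B" "x \<notin> T" for B T
    using split[of B _ B _ T T] that by (intro inj_onI) blast
  have "insert {x} Q1 \<noteq> insert {x, y} Q2"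
    if "Q1 \<in> pair_partitions (S - {x}) b" "y \<in> S - {x}" "Q2 \<in> pair_partitions (S - {x, y}) b"
    for Q1 y Q2
    using split[of "{x}" Q1 "{x, y}" Q2, OF _ _ _ that(1,3)] that(2) by auto
  then have "?single \<inter> (\<Union>y\<in>S - {x}. ?pair y) = {}"
    by blast
  moreover have "?pair y1 \<inter> ?pair y2 = {}" if "y1 \<in> S - {x}" "y2 \<in> S - {x}" "y1 \<noteq> y2" for y1 y2
  proof -
    have "insert {x, y1} Q1 \<noteq> insert {x, y2} Q2"
      if "Q1 \<in> pair_partitions (S - {x, y1}) b" "Q2 \<in> pair_partitions (S - {x, y2}) b" for Q1 Q2
      using split[of "{x, y1}" Q1 "{x, y2}" Q2, OF _ _ _ that] \<open>y1 \<noteq> y2\<close>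
      by (auto simp: doubleton_eq_iff)
    then show ?thesis
      by blast
  qed
  moreover have "finite (insert B ` pair_partitions T b)" if "T \<subseteq> S" for B T
    using finite_pair_partitions S that finite_subset by blast
  ultimately have "card (pair_partitions S (Suc b)) = card ?single + (\<Sum>y\<in>S - {x}. card (?pair y))"
    unfolding pair_partitions_Suc[OF S x] using S
    by (simp add: card_Un_disjoint card_UN_disjoint Diff_subset)
  also have "\<dots> = card (pair_partitions (S - {x}) b) + (\<Sum>y\<in>S - {x}. card (pair_partitions (S - {x, y}) b))"
    using inj by (simp add: card_image)
  finally show ?thesis .
qed

lemma card_pair_partitions:
  "finite S \<Longrightarrow> card (pair_partitions S b) = pair_partition_count (card S) b"
proof (induction "card S" b arbitrary: S rule: pair_partition_count.induct)
  case (1 b)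
  then show ?case
    by (simp add: pair_partitions_empty)
next
  case (2 s S)
  then have "S \<noteq> {}"
    by auto
  then show ?case
    using 2 pair_partitions_0 by (metis card.empty pair_partition_count.simps(2))
next
  case (3 b S)
  then obtain x where "S = {x}"
    by (metis One_nat_def card_1_singleton_iff)
  then show ?case
    using card_pair_partitions_Suc[of S x b] by (simp add: pair_partitions_empty)
next
  case (4 s b S)
  then obtain x where x: "x \<in> S"
    by (metis card.empty ex_in_conv nat.distinct(1))
  have "card (pair_partitions (S - {x, y}) b) = pair_partition_count s b" if "y \<in> S - {x}" for y
    using 4 x that by (simp add: card_Diff_subset flip: 4(3))
  moreover have "card (S - {x}) = Suc s"
    using 4 x by simp
  ultimately show ?case
    using card_pair_partitions_Suc[OF \<open>finite S\<close> x, of b] 4 by (simp flip: 4(3))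
qed

lemma card_P2: "card (P2 n) = (\<Sum>j\<le>n. pair_partition_count (n + j) n)"
proof -
  have "P2 n = (\<Union>k\<le>2 * n. pair_partitions {1..k} n)"
    unfolding P2_def pair_partitions_def by blast
  moreover have "k = l" if "partition_on {1..k} P" "partition_on {1..l} P" for k l :: nat and P
  proof -
    have "{1..k} = {1..l}"
      using partition_onD1 that by metis
    then show ?thesis
      by (metis card_atLeastAtMost diff_Suc_1)
  qed
  then have "pair_partitions {1..k} n \<inter> pair_partitions {1..l} n = {}" if "k \<noteq> l" for k l
    using that by (auto simp: pair_partitions_def)
  ultimately have "card (P2 n) = (\<Sum>k\<le>2 * n. pair_partition_count k n)"
    by (simp add: card_UN_disjoint finite_pair_partitions card_pair_partitions)
  also have "\<dots> = (\<Sum>k<n. pair_partition_count k n) + (\<Sum>k=n..2 * n. pair_partition_count k n)"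
  proof -
    have "{..2 * n} = {..<n} \<union> {n..2 * n}"
      by auto
    then show ?thesis
      by (simp add: sum.union_disjoint ivl_disj_int)
  qed
  also have "\<dots> = (\<Sum>j\<le>n. pair_partition_count (n + j) n)"
    using sum.shift_bounds_cl_nat_ivl[of "\<lambda>k. pair_partition_count k n" 0 n n]
    by (simp add: pair_partition_count_eq_0 atMost_atLeast0 add.commute mult_2)
  finally show ?thesis .
qed

lemma finite_P2: "finite (P2 n)"
  unfolding P2_def
  by (rule finite_subset[of _ "\<Union>k\<le>2 * n. {P. partition_on {1..k} P}"])
    (auto simp: finitely_many_partition_on)

section \<open>Counting linked cycles\<close>

definition linked_cycles_by_nonmins :: "nat \<Rightarrow> nat \<Rightarrow> arranged_block set set" where
  "linked_cycles_by_nonmins m j = {L \<in> linked_cycles m. card (nonmins L) = j}"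

text \<open>The arguments of \<open>add_pair\<close> and \<open>add_after\<close> that produce a linked cycle on
  \<open>[m + 1]\<close> with \<open>j\<close> non-minimal elements.\<close>

definition pair_choices :: "nat \<Rightarrow> nat \<Rightarrow> (arranged_block set \<times> nat) set" where
  "pair_choices m j =
     (SIGMA L:{L \<in> linked_cycles m. Suc (card (nonmins L)) = j}. nonmins L - block_mins L)"

definition after_choices :: "nat \<Rightarrow> nat \<Rightarrow> (arranged_block set \<times> arranged_block \<times> nat) set" where
  "after_choices m j = (SIGMA L:{L \<in> linked_cycles m. Suc (card (nonmins L)) = j}. SIGMA p:L. fst p)"

lemma add_singleton_in_linked_cycles_by_nonmins:
  "L \<in> linked_cycles_by_nonmins m j \<Longrightarrow> add_singleton L (Suc m) \<in> linked_cycles_by_nonmins (Suc m) j"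
  using linked_cycle_add_singleton[of m L]
  by (simp add: linked_cycles_by_nonmins_def linked_cycles_def nonmins_add_singleton)

lemma add_pair_in_linked_cycles_by_nonmins:
  "(L, i) \<in> pair_choices m j \<Longrightarrow> add_pair L i (Suc m) \<in> linked_cycles_by_nonmins (Suc m) j"
  using linked_cycle_add_pair[of m L i] card_nonmins_add_pair[of m L i]
  by (auto simp: pair_choices_def linked_cycles_by_nonmins_def linked_cycles_def)

lemma add_after_in_linked_cycles_by_nonmins:
  "(L, p, a) \<in> after_choices m j \<Longrightarrow> add_after L p a (Suc m) \<in> linked_cycles_by_nonmins (Suc m) j"
  using linked_cycle_add_after[of m L p a] card_nonmins_add_after[of m L p a]
  by (auto simp: after_choices_def linked_cycles_by_nonmins_def linked_cycles_def)

lemma linked_cycles_by_nonmins_Suc_subset: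
  "linked_cycles_by_nonmins (Suc m) j \<subseteq>
     (\<lambda>L. add_singleton L (Suc m)) ` linked_cycles_by_nonmins m j \<union>
     (\<lambda>(L, i). add_pair L i (Suc m)) ` pair_choices m j \<union>
     (\<lambda>(L, p, a). add_after L p a (Suc m)) ` after_choices m j"
  (is "?lhs \<subseteq> ?S \<union> ?P \<union> ?A")
proof
  fix L assume "L \<in> ?lhs"
  then have lc: "linked_cycle (Suc m) L" and j: "card (nonmins L) = j"
    by (auto simp: linked_cycles_by_nonmins_def linked_cycles_def)
  from lc show "L \<in> ?S \<union> ?P \<union> ?A"
  proof (cases rule: linked_cycle_Suc_cases)
    case (singleton L')
    then have "L' \<in> linked_cycles_by_nonmins m j"
      using j by (simp add: linked_cycles_by_nonmins_def linked_cycles_def nonmins_add_singleton)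
    then have "L \<in> ?S"
      using singleton(2) by (rule rev_image_eqI)
    then show ?thesis
      by blast
  next
    case (pair L' i)
    then have "(L', i) \<in> pair_choices m j"
      using j card_nonmins_add_pair[OF pair(1)] by (simp add: pair_choices_def linked_cycles_def)
    then have "L \<in> ?P"
      using pair(3) by (intro image_eqI[where x = "(L', i)"]) simp_all
    then show ?thesis
      by blast
  next
    case (after L' p a)
    then have "(L', p, a) \<in> after_choices m j"
      using j card_nonmins_add_after[OF after(1,2)] by (simp add: after_choices_def linked_cycles_def)
    then have "L \<in> ?A"
      using after(4) by (intro image_eqI[where x = "(L', p, a)"]) simp_all
    then show ?thesis
      by blast
  qed
qed

lemma linked_cycles_by_nonmins_Suc:
  "linked_cycles_by_nonmins (Suc m) j =
     (\<lambda>L. add_singleton L (Suc m)) ` linked_cycles_by_nonmins m j \<union>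
     (\<lambda>(L, i). add_pair L i (Suc m)) ` pair_choices m j \<union>
     (\<lambda>(L, p, a). add_after L p a (Suc m)) ` after_choices m j"
  (is "?lhs = ?S \<union> ?P \<union> ?A")
proof
  show "?lhs \<subseteq> ?S \<union> ?P \<union> ?A"
    by (rule linked_cycles_by_nonmins_Suc_subset)
  show "?S \<union> ?P \<union> ?A \<subseteq> ?lhs"
  proof (intro subsetI, elim UnE imageE)
    fix L L' assume "L' \<in> linked_cycles_by_nonmins m j" "L = add_singleton L' (Suc m)"
    then show "L \<in> ?lhs"
      using add_singleton_in_linked_cycles_by_nonmins by simp
  next
    fix L x assume "x \<in> pair_choices m j" "L = (\<lambda>(L, i). add_pair L i (Suc m)) x"
    then show "L \<in> ?lhs"
      using add_pair_in_linked_cycles_by_nonmins by (cases x) simp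
  next
    fix L x assume "x \<in> after_choices m j" "L = (\<lambda>(L, p, a). add_after L p a (Suc m)) x"
    then show "L \<in> ?lhs"
      using add_after_in_linked_cycles_by_nonmins by (cases x rule: prod_cases3) simp
  qed
qed

lemma inj_on_add_singleton: "inj_on (\<lambda>L. add_singleton L (Suc m)) (linked_cycles_by_nonmins m j)"
  using add_singleton_inj by (auto simp: inj_on_def linked_cycles_by_nonmins_def linked_cycles_def)

lemma inj_on_add_pair: "inj_on (\<lambda>(L, i). add_pair L i (Suc m)) (pair_choices m j)"
proof (rule inj_onI, clarify)
  fix L1 i1 L2 i2
  assume "(L1, i1) \<in> pair_choices m j" "(L2, i2) \<in> pair_choices m j"
    and "add_pair L1 i1 (Suc m) = add_pair L2 i2 (Suc m)"
  then show "L1 = L2 \<and> i1 = i2"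
    using add_pair_inj[of m L1 L2 i1 i2] Suc_not_in_nonmins[of m L1] Suc_not_in_nonmins[of m L2]
    by (auto simp: pair_choices_def linked_cycles_def)
qed

lemma inj_on_add_after: "inj_on (\<lambda>(L, p, a). add_after L p a (Suc m)) (after_choices m j)"
proof (rule inj_onI)
  fix x y
  assume "x \<in> after_choices m j" "y \<in> after_choices m j"
    and "(\<lambda>(L, p, a). add_after L p a (Suc m)) x = (\<lambda>(L, p, a). add_after L p a (Suc m)) y"
  moreover obtain L1 p1 a1 L2 p2 a2 where "x = (L1, p1, a1)" "y = (L2, p2, a2)"
    by (metis prod_cases3)
  ultimately show "x = y"
    using add_after_inj[of m L1 L2 p1 a1 p2 a2] by (auto simp: after_choices_def linked_cycles_def)
qed

lemma extensions_disjoint: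
  "(\<lambda>L. add_singleton L (Suc m)) ` linked_cycles_by_nonmins m j \<inter>
     (\<lambda>(L, i). add_pair L i (Suc m)) ` pair_choices m j = {}"
  "((\<lambda>L. add_singleton L (Suc m)) ` linked_cycles_by_nonmins m j \<union>
     (\<lambda>(L, i). add_pair L i (Suc m)) ` pair_choices m j) \<inter>
     (\<lambda>(L, p, a). add_after L p a (Suc m)) ` after_choices m j = {}"
proof -
  have "add_singleton L1 (Suc m) \<noteq> add_pair L2 i (Suc m)"
    if "L1 \<in> linked_cycles_by_nonmins m j" "(L2, i) \<in> pair_choices m j" for L1 L2 i
    using that add_singleton_neq_add_pair[of m L1 L2 i] Suc_not_in_nonmins[of m L2]
    by (auto simp: linked_cycles_by_nonmins_def pair_choices_def linked_cycles_def)
  then show "(\<lambda>L. add_singleton L (Suc m)) ` linked_cycles_by_nonmins m j \<inter>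
     (\<lambda>(L, i). add_pair L i (Suc m)) ` pair_choices m j = {}"
    by (auto simp: disjoint_iff)
  have "add_singleton L1 (Suc m) \<noteq> add_after L2 p a (Suc m)"
    if "L1 \<in> linked_cycles_by_nonmins m j" "(L2, p, a) \<in> after_choices m j" for L1 L2 p a
    using that add_singleton_neq_add_after[of m L1 L2 p a]
    by (auto simp: linked_cycles_by_nonmins_def after_choices_def linked_cycles_def)
  moreover have "add_pair L1 i (Suc m) \<noteq> add_after L2 p a (Suc m)"
    if "(L1, i) \<in> pair_choices m j" "(L2, p, a) \<in> after_choices m j" for L1 i L2 p a
    using that add_pair_neq_add_after[of m L1 L2 i p a]
    by (auto simp: pair_choices_def after_choices_def linked_cycles_def)
  ultimately show "((\<lambda>L. add_singleton L (Suc m)) ` linked_cycles_by_nonmins m j \<union>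
     (\<lambda>(L, i). add_pair L i (Suc m)) ` pair_choices m j) \<inter>
     (\<lambda>(L, p, a). add_after L p a (Suc m)) ` after_choices m j = {}"
    by (auto simp: disjoint_iff)
qed

lemma card_linked_cycles_by_nonmins_Suc_split:
  "card (linked_cycles_by_nonmins (Suc m) j) =
     card (linked_cycles_by_nonmins m j) + card (pair_choices m j) + card (after_choices m j)"
proof -
  have "finite (linked_cycles_by_nonmins m j)" "finite (pair_choices m j)" "finite (after_choices m j)"
    using finite_linked_cycles[of m] finite_nonmins finite_linked_cycle linked_cycleD(3)
    by (auto simp: linked_cycles_by_nonmins_def pair_choices_def after_choices_def linked_cycles_def
        intro!: finite_SigmaI)
  then show ?thesis
    using linked_cycles_by_nonmins_Suc[of m j] extensions_disjoint[of m j]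
      inj_on_add_singleton inj_on_add_pair inj_on_add_after
    by (simp add: card_Un_disjoint card_image)
qed

text \<open>Adding \<open>m + 1\<close> as a pair \<open>{i, m + 1}\<close> or into a block gives
  \<open>|nonmins L - block_mins L| + \<Sum>\<^sub>B |B| = (m - |L|) + (|L| + |nonmins L|)\<close> choices.\<close>

lemma card_pair_choices_plus_after_choices:
  "card (pair_choices m j) + card (after_choices m j) =
     (m + j - 1) * card {L \<in> linked_cycles m. Suc (card (nonmins L)) = j}"
proof -
  let ?pred = "{L \<in> linked_cycles m. Suc (card (nonmins L)) = j}"
  have "finite ?pred"
    using finite_linked_cycles by simp
  moreover have "\<forall>L\<in>?pred. finite (nonmins L - block_mins L) \<and> finite (SIGMA p:L. fst p)"
    using finite_nonmins finite_linked_cycle linked_cycleD(3)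
    by (auto simp: linked_cycles_def intro!: finite_SigmaI)
  ultimately have "card (pair_choices m j) + card (after_choices m j) =
      (\<Sum>L\<in>?pred. card (nonmins L - block_mins L) + (\<Sum>p\<in>L. card (fst p)))"
    unfolding pair_choices_def after_choices_def sum.distrib
    using finite_linked_cycle linked_cycleD(3)
    by (subst (1 2) card_SigmaI) (auto simp: linked_cycles_def intro!: sum.cong card_SigmaI)
  also have "\<dots> = (\<Sum>L\<in>?pred. m + j - 1)"
    using sum_card_blocks card_nonmins_Diff_block_mins
    by (intro sum.cong) (auto simp: linked_cycles_def)
  finally show ?thesis
    by simp
qed

lemma card_linked_cycles_by_nonmins_Suc:
  "card (linked_cycles_by_nonmins (Suc m) j) =
     card (linked_cycles_by_nonmins m j) +
     (m + j - 1) * card {L \<in> linked_cycles m. Suc (card (nonmins L)) = j}"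
  using card_linked_cycles_by_nonmins_Suc_split card_pair_choices_plus_after_choices by simp

lemma linked_cycles_0: "linked_cycles 0 = {{}}"
  using linked_cycleD(1,2) by (fastforce simp: linked_cycles_def linked_cycle_iff linked_blocks_def)

lemma card_linked_cycles_by_nonmins:
  "card (linked_cycles_by_nonmins (Suc m) j) = pair_partition_count (m + j) m"
proof (induction m arbitrary: j)
  case 0
  have "linked_cycles_by_nonmins 0 j = (if j = 0 then {{}} else {})"
    "{L \<in> linked_cycles 0. Suc (card (nonmins L)) = j} = (if j = 1 then {{}} else {})"
    by (auto simp: linked_cycles_by_nonmins_def linked_cycles_0 nonmins_def)
  then show ?case
    using card_linked_cycles_by_nonmins_Suc[of 0 j] by (cases j) simp_all
next
  case (Suc m)
  have "{L \<in> linked_cycles (Suc m). Suc (card (nonmins L)) = j} =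
      (if j = 0 then {} else linked_cycles_by_nonmins (Suc m) (j - 1))"
    by (auto simp: linked_cycles_by_nonmins_def)
  then have "card (linked_cycles_by_nonmins (Suc (Suc m)) j) =
      pair_partition_count (m + j) m + (m + j) * (if j = 0 then 0 else pair_partition_count (m + j - 1) m)"
    using card_linked_cycles_by_nonmins_Suc[of "Suc m" j] Suc.IH by simp
  also have "\<dots> = pair_partition_count (Suc m + j) (Suc m)"
  proof (cases j)
    case 0
    then show ?thesis
      by (cases m) (simp_all add: pair_partition_count_eq_0)
  qed simp
  finally show ?case .
qed

lemma card_linked_cycles_Suc:
  "card (linked_cycles (Suc n)) = (\<Sum>j\<le>n. pair_partition_count (n + j) n)"
proof -
  have "card (nonmins L) \<le> n" if "linked_cycle (Suc n) L" for L
    using card_mono[OF _ nonmins_subset[OF that]] by simp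
  then have "linked_cycles (Suc n) = (\<Union>j\<le>n. linked_cycles_by_nonmins (Suc n) j)"
    by (auto simp: linked_cycles_by_nonmins_def linked_cycles_def)
  moreover have "finite (linked_cycles_by_nonmins (Suc n) j)" for j
    using finite_linked_cycles[of "Suc n"] by (simp add: linked_cycles_by_nonmins_def)
  ultimately have "card (linked_cycles (Suc n)) = (\<Sum>j\<le>n. card (linked_cycles_by_nonmins (Suc n) j))"
    by (simp only:) (rule card_UN_disjoint; auto simp: linked_cycles_by_nonmins_def)
  then show ?thesis
    by (simp add: card_linked_cycles_by_nonmins)
qed

theorem mainTheorem12:
  fixes n :: nat
  shows "\<exists>f. bij_betw f (linked_cycles (n + 1)) (P2 n)"
proof -
  have "card (linked_cycles (n + 1)) = card (P2 n)"
    using card_linked_cycles_Suc card_P2 by simp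
  then show ?thesis
    using finite_same_card_bij finite_linked_cycles finite_P2 by blast
qed

end
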